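(* For every odd prime $p$, $$\sum_{k=0}^{p-1} (k+1)_{\frac{p-1}{2}}^2 \equiv -1 \pmod{p}.$$
   Context: $(a)_n = a(a+1)\cdots(a+n-1)$ denotes the rising factorial, with $(a)_0 = 1$. *)

theory Defs
  imports Complex_Main "HOL-Number_Theory.Cong"
begin

end

theory Submission
  imports Defs "HOL-Number_Theory.Number_Theory"
begin

text \<open>Write \<open>p = 2n + 1\<close> and \<open>S\<close> for the sum. For \<open>k > n\<close> the product \<open>(k+1)\<^sub>n\<close> contains
the factor \<open>p\<close>, so only \<open>k \<le> n\<close> contribute. For those,
\<open>(k+1)\<^sub>n n! = binom n k (k+n)! (n-k)!\<close>, and the Wilson-type congruence
\<open>m! (p-1-m)! \<equiv> \<plusminus>1\<close> turns this into \<open>(k+1)\<^sub>n n! \<equiv> \<plusminus>binom n k\<close>. Squaring and summing with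
\<open>\<Sum>\<^sub>k binom n k\<^sup>2 = binom (2n) n\<close> gives \<open>S (n!)\<^sup>2 \<equiv> binom (2n) n\<close>, hence
\<open>S (n!)\<^sup>4 \<equiv> (2n)! \<equiv> -1\<close> by Wilson, while \<open>(n!)\<^sup>4 \<equiv> 1\<close> because \<open>(n!)\<^sup>2 = n! (p-1-n)! \<equiv> \<plusminus>1\<close>.\<close>

lemma fact_mult_pochhammer:
  "fact k * pochhammer (of_nat k + 1) n = (fact (k + n) :: 'a::{comm_semiring_1,semiring_char_0})"
  by (simp add: pochhammer_fact pochhammer_product' add.commute)

lemma of_nat_dvd_pochhammer:
  assumes "k < p" and "p \<le> k + n"
  shows "(of_nat p :: 'a::comm_semiring_1) dvd pochhammer (of_nat k + 1) n"
proof -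
  have "p = k + 1 + (p - 1 - k)" using assms by simp
  then have "of_nat p = (of_nat k + 1 + of_nat (p - 1 - k) :: 'a)"
    by (metis of_nat_1 of_nat_add)
  also have "\<dots> dvd (\<Prod>i<n. of_nat k + 1 + of_nat i)"
    using assms by (intro dvd_prodI) auto
  finally show ?thesis by (simp add: pochhammer_prod atLeast0LessThan)
qed

lemma fact_mult_fact_complement_cong:
  fixes p :: nat
  assumes "prime p" and "m \<le> p - 1"
  shows "[fact m * fact (p - 1 - m) = (-1::int) ^ (m + 1)] (mod int p)"
  using assms(2)
proof (induction m)
  case 0
  then show ?case using wilson_theorem[OF assms(1)] by simp
next
  case (Suc m)
  have "p - 1 - m = Suc (p - 1 - Suc m)" using Suc.prems by simp
  then have "(fact m * fact (p - 1 - m) :: int) = fact m * int (p - 1 - m) * fact (p - 1 - Suc m)"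
    by simp
  also have "[\<dots> = fact m * (- int (Suc m)) * fact (p - 1 - Suc m)] (mod int p)"
    using Suc.prems prime_gt_0_nat[OF assms(1)]
    by (intro cong_mult cong_refl) (simp add: cong_iff_dvd_diff of_nat_diff)
  also have "fact m * (- int (Suc m)) * fact (p - 1 - Suc m) = - (fact (Suc m) * fact (p - 1 - Suc m))"
    by (simp add: algebra_simps)
  finally have "[- (fact (Suc m) * fact (p - 1 - Suc m)) = (-1::int) ^ (m + 1)] (mod int p)"
    using Suc by (meson Suc_leD cong_sym cong_trans)
  then show ?case by (metis cong_minus_minus_iff minus_minus power_Suc mult_minus1 Suc_eq_plus1)
qed

lemma pochhammer_mult_fact_cong_binomial:
  fixes p :: nat
  assumes "prime p" and "p = 2 * n + 1" and "k \<le> n"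
  shows "[pochhammer (int k + 1) n * fact n = (-1) ^ (k + n + 1) * int (n choose k)] (mod int p)"
proof -
  have "(fact n :: int) = fact k * fact (n - k) * int (n choose k)"
    using binomial_fact_lemma[OF assms(3)] by (metis of_nat_fact of_nat_mult)
  then have "pochhammer (int k + 1) n * fact n
      = int (n choose k) * (fact (k + n) * fact (p - 1 - (k + n)))"
    using fact_mult_pochhammer[of k n] assms(2,3) by (simp add: algebra_simps)
  also have "[\<dots> = int (n choose k) * (-1) ^ (k + n + 1)] (mod int p)"
    using assms by (intro cong_scalar_left fact_mult_fact_complement_cong) auto
  finally show ?thesis by (simp add: mult.commute)
qed

lemma sum_pochhammer_sq_mult_fact_sq_cong:
  fixes p :: nat
  assumes "prime p" and "p = 2 * n + 1"
  shows "[(\<Sum>k=0..p-1. (pochhammer (int k + 1) n)\<^sup>2) * (fact n)\<^sup>2 = int ((2 * n) choose n)] (mod int p)"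
proof -
  let ?f = "\<lambda>k. (pochhammer (int k + 1) n * fact n)\<^sup>2"
  have "{0..p-1} = {0..n} \<union> {n+1..2*n}" using assms(2) by auto
  then have "(\<Sum>k=0..p-1. (pochhammer (int k + 1) n)\<^sup>2) * (fact n)\<^sup>2
      = (\<Sum>k=0..n. ?f k) + (\<Sum>k=n+1..2*n. ?f k)"
    by (simp add: distrib_right sum_distrib_right power_mult_distrib sum.union_disjoint)
  also have "[\<dots> = (\<Sum>k=0..n. (int (n choose k))\<^sup>2) + (\<Sum>k=n+1..2*n. 0)] (mod int p)"
  proof (intro cong_add cong_sum)
    fix k assume "k \<in> {0..n}"
    then have "[?f k = ((-1) ^ (k + n + 1) * int (n choose k))\<^sup>2] (mod int p)"
      using assms by (intro cong_pow pochhammer_mult_fact_cong_binomial) auto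
    then show "[?f k = (int (n choose k))\<^sup>2] (mod int p)"
      by (simp add: power_mult_distrib flip: power_mult)
  next
    fix k assume "k \<in> {n+1..2*n}"
    then have "int p dvd pochhammer (int k + 1) n"
      using assms(2) of_nat_dvd_pochhammer[of k p n] by simp
    then show "[?f k = 0] (mod int p)"
      by (simp add: cong_0_iff power2_eq_square)
  qed
  also have "(\<Sum>k=0..n. (int (n choose k))\<^sup>2) + (\<Sum>k=n+1..2*n. 0) = int ((2 * n) choose n)"
    by (simp add: atLeast0AtMost flip: choose_square_sum)
  finally show ?thesis .
qed

lemma central_binomial_mult_fact_sq: "((2 * n) choose n) * (fact n)\<^sup>2 = (fact (2 * n) :: nat)"
  using binomial_fact_lemma[of n "2 * n"] by (simp add: mult_2 power2_eq_square algebra_simps)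

theorem lemma2p9:
  fixes p :: nat
  assumes "prime p" and "odd p"
  shows "[(\<Sum>k=0..p-1. (pochhammer (int k + 1) ((p - 1) div 2))^2) = -1] (mod int p)"
proof -
  define n where "n = (p - 1) div 2"
  define S where "S = (\<Sum>k=0..p-1. (pochhammer (int k + 1) n)\<^sup>2)"
  have p: "p = 2 * n + 1" using assms(2) unfolding n_def by presburger
  have "[(fact n)\<^sup>2 = (-1::int) ^ (n + 1)] (mod int p)"
    using fact_mult_fact_complement_cong[OF assms(1), of n] p by (simp add: power2_eq_square)
  then have "[((fact n)\<^sup>2)\<^sup>2 = ((-1::int) ^ (n + 1))\<^sup>2] (mod int p)" by (rule cong_pow)
  then have fact_pow4: "[(fact n) ^ 4 = (1::int)] (mod int p)"
    by (simp flip: power_mult)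
  have "S * (fact n) ^ 4 = (S * (fact n)\<^sup>2) * (fact n)\<^sup>2"
    by (simp add: mult.assoc power_add[symmetric] del: power_add)
  also have "[\<dots> = int ((2 * n) choose n) * (fact n)\<^sup>2] (mod int p)"
    unfolding S_def using sum_pochhammer_sq_mult_fact_sq_cong[OF assms(1) p] by (rule cong_scalar_right)
  also have "int ((2 * n) choose n) * (fact n)\<^sup>2 = fact (p - 1)"
    using central_binomial_mult_fact_sq[of n] p by (metis diff_add_inverse2 of_nat_fact of_nat_mult of_nat_power)
  also have "[\<dots> = -1] (mod int p)" by (rule wilson_theorem[OF assms(1)])
  finally have "[S * (fact n) ^ 4 = -1] (mod int p)" .
  moreover have "[S * (fact n) ^ 4 = S] (mod int p)" using fact_pow4 by (metis cong_scalar_left mult_1_right)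
  ultimately have "[S = -1] (mod int p)" by (meson cong_sym cong_trans)
  then show ?thesis unfolding S_def n_def .
qed
end
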